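(* Let $d\ge2$. For every $\phi\in\mathcal O_d$ there exist $\psi\in\mathcal Q_d$ and a continuous path $\gamma:[0,1]\to\mathcal O_d$ with $\gamma(0)=\phi$ and $\gamma(1)=\psi$.
   Context: A polynomial knot is a map $\phi:\mathbb R\to\mathbb R^3$ with real polynomial components which is a smooth embedding ($\phi$ injective and $\phi'(t)\ne0$ for all $t$). For $d\ge2$, $\mathcal A_d$ is the set of polynomial maps $t\mapsto(f(t),g(t),h(t))$ with $\deg f\le d-2$, $\deg g\le d-1$, $\deg h\le d$, topologized via the bijection with Euclidean $\mathbb R^{3d}$ sending $(f,g,h)$ to its coefficient vector $(a_0,\dots,a_{d-2},b_0,\dots,b_{d-1},c_0,\dots,c_d)$, where $f=\sum a_it^i$, $g=\sum b_it^i$, $h=\sum c_it^i$. $\mathcal O_d$ is the set of polynomial knots in $\mathcal A_d$; $\mathcal Q_d$ is the set of polynomial knots $(f,g,h)$ with $\deg f=d-2$, $\deg g=d-1$, $\deg h=d$ exactly. All carry the subspace topology. *)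

theory Defs
  imports "HOL-Analysis.Analysis" "HOL-Computational_Algebra.Polynomial"
begin

type_synonym ptriple = "real poly \<times> real poly \<times> real poly"

definition curve :: "ptriple \<Rightarrow> real \<Rightarrow> real \<times> real \<times> real" where
  "curve P = (\<lambda>t. case P of (f, g, h) \<Rightarrow> (poly f t, poly g t, poly h t))"

definition curve_deriv :: "ptriple \<Rightarrow> real \<Rightarrow> real \<times> real \<times> real" where
  "curve_deriv P = (\<lambda>t. case P of (f, g, h) \<Rightarrow>
      (poly (pderiv f) t, poly (pderiv g) t, poly (pderiv h) t))"

definition poly_knot :: "ptriple \<Rightarrow> bool" where
  "poly_knot P \<longleftrightarrow> inj (curve P) \<and> (\<forall>t. curve_deriv P t \<noteq> 0)"

definition A_set :: "nat \<Rightarrow> ptriple set" where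
  "A_set d = {(f, g, h). degree f \<le> d - 2 \<and> degree g \<le> d - 1 \<and> degree h \<le> d}"

definition O_set :: "nat \<Rightarrow> ptriple set" where
  "O_set d = {P \<in> A_set d. poly_knot P}"

text \<open>Exact degrees; nonzero-ness required so that e.g. degree 0 means a nonzero constant.\<close>
definition Q_set :: "nat \<Rightarrow> ptriple set" where
  "Q_set d = {(f, g, h). poly_knot (f, g, h) \<and> f \<noteq> 0 \<and> g \<noteq> 0 \<and> h \<noteq> 0 \<and>
      degree f = d - 2 \<and> degree g = d - 1 \<and> degree h = d}"

text \<open>Continuity of a path in A_d w.r.t. the Euclidean topology on coefficient vectors:
  every coefficient of every component depends continuously on the parameter.\<close>
definition coeff_continuous_on :: "real set \<Rightarrow> (real \<Rightarrow> ptriple) \<Rightarrow> bool" where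
  "coeff_continuous_on S \<gamma> \<longleftrightarrow>
     (\<forall>i. continuous_on S (\<lambda>s. coeff (fst (\<gamma> s)) i) \<and>
          continuous_on S (\<lambda>s. coeff (fst (snd (\<gamma> s))) i) \<and>
          continuous_on S (\<lambda>s. coeff (snd (snd (\<gamma> s))) i))"

end

theory Submission
  imports Defs
begin

text \<open>
  Zooming in on \<open>t = 0\<close>, \<open>\<phi>\<^sub>\<lambda>(t) = \<phi>(0) + (\<phi>(\<lambda> t) - \<phi>(0)) / \<lambda>\<close> is a knot for every
  \<open>\<lambda> \<noteq> 0\<close> and tends to the tangent line of \<phi> at 0 as \<open>\<lambda> \<rightarrow> 0\<close>; this deforms \<phi> inside \<open>\<O>\<^sub>d\<close>
  into a linear knot.  Along a straight segment between two polynomial maps, a coordinate whose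
  derivatives at both ends never vanish and have the same sign stays strictly monotone, so the
  whole segment consists of knots.  Two such segments lead from the linear knot to a map of exact
  degrees \<open>d - 2, d - 1, d\<close> whose coordinate of odd degree \<open>n\<close> is \<open>c (t\<^sup>n + t)\<close>: its derivative
  \<open>c (n t\<^sup>n\<^sup>-\<^sup>1 + 1)\<close> has the sign of \<open>c\<close> everywhere.
\<close>

definition component :: "nat \<Rightarrow> ptriple \<Rightarrow> real poly" where
  "component i P = (if i = 0 then fst P else if i = 1 then fst (snd P) else snd (snd P))"

definition triple :: "(nat \<Rightarrow> real poly) \<Rightarrow> ptriple" where
  "triple F = (F 0, F 1, F 2)"

lemma all_less_3: "(\<forall>i<(3::nat). Q i) \<longleftrightarrow> Q 0 \<and> Q 1 \<and> Q 2"
  by (auto simp: less_Suc_eq numeral_eq_Suc)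

lemma ex_less_3: "(\<exists>i<(3::nat). Q i) \<longleftrightarrow> Q 0 \<or> Q 1 \<or> Q 2"
  by (auto simp: less_Suc_eq numeral_eq_Suc)

lemma component_triple [simp]: "i < 3 \<Longrightarrow> component i (triple F) = F i"
  by (auto simp: component_def triple_def less_Suc_eq numeral_eq_Suc)

lemma component_simps [simp]:
  "component 0 (f, g, h) = f" "component 1 (f, g, h) = g" "component (Suc 0) (f, g, h) = g"
  "component 2 (f, g, h) = h"
  by (auto simp: component_def)

lemma triple_component [simp]: "triple (\<lambda>i. component i P) = P"
  by (auto simp: component_def triple_def)

lemma A_set_iff_component:
  "d \<ge> 2 \<Longrightarrow> P \<in> A_set d \<longleftrightarrow> (\<forall>i<3. degree (component i P) \<le> d - 2 + i)"
  by (cases P) (auto simp: A_set_def all_less_3)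

lemma coeff_continuous_on_iff_component:
  "coeff_continuous_on S \<gamma> \<longleftrightarrow>
     (\<forall>i<3. \<forall>j. continuous_on S (\<lambda>s. coeff (component i (\<gamma> s)) j))"
  by (auto simp: coeff_continuous_on_def all_less_3 component_def)

lemma Q_set_subset_O_set: "Q_set d \<subseteq> O_set d"
  by (auto simp: Q_set_def O_set_def A_set_def)

subsection \<open>Knots with a monotone coordinate\<close>

lemma Pair_eq_zero_iff: "(a, b) = 0 \<longleftrightarrow> a = 0 \<and> b = 0"
  by (simp add: zero_prod_def)

lemma inj_poly_if_pderiv_nonzero:
  fixes p :: "real poly"
  assumes "\<And>t. poly (pderiv p) t \<noteq> 0"
  shows "inj (poly p)"
proof (rule injI, rule ccontr)
  fix x y assume "poly p x = poly p y" "x \<noteq> y"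
  then obtain a b where ab: "a < b" "poly p a = poly p b"
    by (metis linorder_neqE)
  then obtain z where "poly p b - poly p a = (b - a) * poly (pderiv p) z"
    using poly_MVT by blast
  with ab assms show False
    by simp
qed

lemma poly_knot_if_component_pderiv_nonzero:
  assumes "i < 3" "\<And>t. poly (pderiv (component i P)) t \<noteq> 0"
  shows "poly_knot P"
proof -
  obtain f g h where P: "P = (f, g, h)"
    by (cases P)
  have inj: "inj (poly (component i P))"
    using assms(2) by (rule inj_poly_if_pderiv_nonzero)
  have "i = 0 \<or> i = 1 \<or> i = 2"
    using assms(1) by linarith
  then show ?thesis
    using inj assms(2)
    by (elim disjE) (auto simp: poly_knot_def P curve_def curve_deriv_def inj_def Pair_eq_zero_iff)
qed

lemma poly_pderiv_0: "poly (pderiv p) 0 = coeff p 1"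
  by (simp add: poly_0_coeff_0 coeff_pderiv)

lemma poly_knot_imp_slope_nonzero:
  assumes "poly_knot P"
  shows "\<exists>i<3. coeff (component i P) 1 \<noteq> 0"
proof -
  obtain f g h where P: "P = (f, g, h)"
    by (cases P)
  have "curve_deriv P 0 \<noteq> 0"
    using assms by (simp add: poly_knot_def)
  then have "poly (pderiv f) 0 \<noteq> 0 \<or> poly (pderiv g) 0 \<noteq> 0 \<or> poly (pderiv h) 0 \<noteq> 0"
    by (simp add: P curve_deriv_def Pair_eq_zero_iff)
  then show ?thesis
    unfolding ex_less_3 by (simp add: P poly_pderiv_0)
qed

definition joined_in_O :: "nat \<Rightarrow> ptriple \<Rightarrow> ptriple \<Rightarrow> bool" where
  "joined_in_O d P Q \<longleftrightarrow>
     (\<exists>\<gamma>. coeff_continuous_on {0..1} \<gamma> \<and> \<gamma> ` {0..1} \<subseteq> O_set d \<and> \<gamma> 0 = P \<and> \<gamma> 1 = Q)"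

lemma joined_in_O_imp_in_O_set: "joined_in_O d P Q \<Longrightarrow> Q \<in> O_set d"
  unfolding joined_in_O_def by force

lemma joined_in_O_trans:
  assumes "joined_in_O d P Q" "joined_in_O d Q R"
  shows "joined_in_O d P R"
proof -
  obtain \<gamma>\<^sub>1 \<gamma>\<^sub>2 where
    \<gamma>\<^sub>1: "coeff_continuous_on {0..1} \<gamma>\<^sub>1" "\<gamma>\<^sub>1 ` {0..1} \<subseteq> O_set d" "\<gamma>\<^sub>1 0 = P" "\<gamma>\<^sub>1 1 = Q" and
    \<gamma>\<^sub>2: "coeff_continuous_on {0..1} \<gamma>\<^sub>2" "\<gamma>\<^sub>2 ` {0..1} \<subseteq> O_set d" "\<gamma>\<^sub>2 0 = Q" "\<gamma>\<^sub>2 1 = R"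
    using assms unfolding joined_in_O_def by blast
  define \<gamma> where "\<gamma> s = (if s \<le> 1/2 then \<gamma>\<^sub>1 (2 * s) else \<gamma>\<^sub>2 (2 * s - 1))" for s :: real
  have "coeff_continuous_on {0..1} \<gamma>"
    unfolding coeff_continuous_on_iff_component
  proof (intro allI impI)
    fix i j :: nat
    assume "i < 3"
    let ?c = "\<lambda>\<gamma>' s. coeff (component i (\<gamma>' s)) j"
    have "path (?c \<gamma>\<^sub>1 +++ ?c \<gamma>\<^sub>2)"
      using \<gamma>\<^sub>1 \<gamma>\<^sub>2 \<open>i < 3\<close>
      by (intro path_join_imp)
        (auto simp: path_def pathstart_def pathfinish_def coeff_continuous_on_iff_component)
    moreover have "?c \<gamma>\<^sub>1 +++ ?c \<gamma>\<^sub>2 = ?c \<gamma>"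
      by (simp add: joinpaths_def \<gamma>_def fun_eq_iff)
    ultimately show "continuous_on {0..1} (?c \<gamma>)"
      by (simp add: path_def)
  qed
  moreover have "\<gamma> ` {0..1} \<subseteq> O_set d"
    using \<gamma>\<^sub>1(2) \<gamma>\<^sub>2(2) by (auto simp: \<gamma>_def image_subset_iff)
  moreover have "\<gamma> 0 = P" "\<gamma> 1 = R"
    using \<gamma>\<^sub>1 \<gamma>\<^sub>2 by (auto simp: \<gamma>_def)
  ultimately show ?thesis
    unfolding joined_in_O_def by blast
qed

lemma convex_comb_nonzero_if_same_sign:
  fixes a b c s :: real
  assumes "sgn a = sgn c" "sgn b = sgn c" "c \<noteq> 0" "0 \<le> s" "s \<le> 1"
  shows "(1 - s) * a + s * b \<noteq> 0"
proof -
  have "0 < a \<and> 0 < b \<or> a < 0 \<and> b < 0"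
    using assms(1-3) by (cases c rule: linorder_cases) (auto simp: sgn_if split: if_splits)
  then show ?thesis
  proof
    assume "0 < a \<and> 0 < b"
    then have "(1 - s) * - a + s * - b < 0"
      using assms(4,5) by (intro convex_bound_lt) auto
    then show ?thesis
      unfolding mult_minus_right by linarith
  next
    assume "a < 0 \<and> b < 0"
    then have "(1 - s) * a + s * b < 0"
      using assms(4,5) by (intro convex_bound_lt) auto
    then show ?thesis
      by linarith
  qed
qed

definition segment_path :: "ptriple \<Rightarrow> ptriple \<Rightarrow> real \<Rightarrow> ptriple" where
  "segment_path P Q s = triple (\<lambda>i. smult (1 - s) (component i P) + smult s (component i Q))"

lemma joined_in_O_segment:
  assumes d: "d \<ge> 2" and P: "P \<in> A_set d" and Q: "Q \<in> A_set d"
    and i: "i < 3" and c: "c \<noteq> 0"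
    and sgn_P: "\<And>t. sgn (poly (pderiv (component i P)) t) = sgn c"
    and sgn_Q: "\<And>t. sgn (poly (pderiv (component i Q)) t) = sgn c"
  shows "joined_in_O d P Q"
  unfolding joined_in_O_def
proof (intro exI conjI)
  show "coeff_continuous_on {0..1} (segment_path P Q)"
    unfolding coeff_continuous_on_iff_component segment_path_def
    by (auto intro!: continuous_intros)
  show "segment_path P Q 0 = P" "segment_path P Q 1 = Q"
    by (simp_all add: segment_path_def)
  show "segment_path P Q ` {0..1} \<subseteq> O_set d"
  proof (rule image_subsetI)
    fix s :: real
    assume "s \<in> {0..1}"
    then have s: "0 \<le> s" "s \<le> 1"
      by auto
    have "degree (component k (segment_path P Q s)) \<le> d - 2 + k" if "k < 3" for k
    proof -
      have "degree (component k (segment_path P Q s))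
          \<le> max (degree (smult (1 - s) (component k P))) (degree (smult s (component k Q)))"
        unfolding segment_path_def component_triple[OF that] by (rule degree_add_le_max)
      also have "\<dots> \<le> max (degree (component k P)) (degree (component k Q))"
        by (intro max.mono degree_smult_le)
      also have "\<dots> \<le> d - 2 + k"
        using P Q that by (simp add: A_set_iff_component[OF d])
      finally show ?thesis .
    qed
    then have "segment_path P Q s \<in> A_set d"
      by (simp add: A_set_iff_component[OF d])
    moreover have "poly (pderiv (component i (segment_path P Q s))) t \<noteq> 0" for t
      using i convex_comb_nonzero_if_same_sign[OF sgn_P sgn_Q c s]
      by (simp add: segment_path_def pderiv_add pderiv_smult)
    then have "poly_knot (segment_path P Q s)"
      using i poly_knot_if_component_pderiv_nonzero by blast
    ultimately show "segment_path P Q s \<in> O_set d"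
      by (simp add: O_set_def)
  qed
qed

subsection \<open>Zooming in on the origin\<close>

text \<open>Writing \<open>p = p(0) + t q(t)\<close>, \<open>rescale c p\<close> is \<open>p(0) + t q(c t)\<close>, which equals
  \<open>p(0) + (p(c t) - p(0)) / c\<close> for \<open>c \<noteq> 0\<close> and is the tangent line of \<open>p\<close> at 0 for \<open>c = 0\<close>.\<close>

definition rescale :: "real \<Rightarrow> real poly \<Rightarrow> real poly" where
  "rescale c p = pCons (coeff p 0) (pcompose (poly_shift 1 p) [:0, c:])"

lemma coeff_rescale:
  "coeff (rescale c p) j = (if j = 0 then coeff p 0 else c ^ (j - 1) * coeff p j)"
  by (cases j) (auto simp: rescale_def coeff_pcompose_linear coeff_poly_shift)

lemma rescale_1 [simp]: "rescale 1 p = p"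
  by (rule poly_eqI) (simp add: coeff_rescale)

lemma rescale_0: "rescale 0 p = [:coeff p 0, coeff p 1:]"
  by (rule poly_eqI) (auto simp: coeff_rescale coeff_pCons split: nat.splits)

lemma degree_rescale_le: "degree (rescale c p) \<le> degree p"
  by (rule degree_le) (auto simp: coeff_rescale coeff_eq_0)

lemma smult_rescale:
  "smult c (rescale c p - [:coeff p 0:]) = pcompose p [:0, c:] - [:coeff p 0:]"
  by (rule poly_eqI) (auto simp: coeff_rescale coeff_pcompose_linear coeff_pCons split: nat.splits)

lemma poly_rescale: "poly p (c * t) = poly p 0 + c * (poly (rescale c p) t - poly p 0)"
  using arg_cong[OF smult_rescale[of c p], of "\<lambda>q. poly q t"]
  by (simp add: poly_pcompose poly_0_coeff_0 algebra_simps)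

lemma poly_pderiv_rescale:
  "c \<noteq> 0 \<Longrightarrow> poly (pderiv (rescale c p)) t = poly (pderiv p) (c * t)"
  using arg_cong[OF smult_rescale[of c p], of "\<lambda>q. poly (pderiv q) t"]
  by (simp add: pderiv_smult pderiv_diff pderiv_pcompose poly_pcompose pderiv_pCons algebra_simps)

definition rescale_triple :: "real \<Rightarrow> ptriple \<Rightarrow> ptriple" where
  "rescale_triple c = map_prod (rescale c) (map_prod (rescale c) (rescale c))"

lemma component_rescale_triple [simp]:
  "component i (rescale_triple c P) = rescale c (component i P)"
  by (simp add: rescale_triple_def component_def)

lemma curve_rescale_triple:
  "curve P (c * t) = curve P 0 + c *\<^sub>R (curve (rescale_triple c P) t - curve P 0)"
  by (cases P) (simp add: curve_def rescale_triple_def poly_rescale[of _ c t])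

lemma curve_deriv_rescale_triple:
  "c \<noteq> 0 \<Longrightarrow> curve_deriv (rescale_triple c P) t = curve_deriv P (c * t)"
  by (cases P) (simp add: curve_deriv_def rescale_triple_def poly_pderiv_rescale)

lemma poly_knot_rescale_triple:
  assumes "poly_knot P" "c \<noteq> 0"
  shows "poly_knot (rescale_triple c P)"
  unfolding poly_knot_def
proof
  show "inj (curve (rescale_triple c P))"
  proof (rule injI)
    fix x y
    assume "curve (rescale_triple c P) x = curve (rescale_triple c P) y"
    then have "curve P (c * x) = curve P (c * y)"
      by (simp add: curve_rescale_triple)
    with assms show "x = y"
      by (auto simp: poly_knot_def dest: injD)
  qed
  show "\<forall>t. curve_deriv (rescale_triple c P) t \<noteq> 0"
    using assms by (simp add: curve_deriv_rescale_triple poly_knot_def)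
qed

lemma poly_knot_rescale_triple_0:
  assumes "poly_knot P"
  shows "poly_knot (rescale_triple 0 P)"
proof -
  obtain i where "i < 3" "coeff (component i P) 1 \<noteq> 0"
    using poly_knot_imp_slope_nonzero[OF assms] by blast
  then show ?thesis
    by (intro poly_knot_if_component_pderiv_nonzero[of i]) (simp_all add: rescale_0 pderiv_pCons)
qed

lemma joined_in_O_rescale_triple_0:
  assumes d: "d \<ge> 2" and P: "P \<in> O_set d"
  shows "joined_in_O d P (rescale_triple 0 P)"
  unfolding joined_in_O_def
proof (intro exI conjI)
  let ?\<gamma> = "\<lambda>s. rescale_triple (1 - s) P"
  show "coeff_continuous_on {0..1} ?\<gamma>"
    unfolding coeff_continuous_on_iff_component
  proof (intro allI impI)
    fix i j :: nat
    show "continuous_on {0..1} (\<lambda>s. coeff (component i (?\<gamma> s)) j)"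
      by (cases "j = 0") (auto simp: coeff_rescale intro!: continuous_intros)
  qed
  show "?\<gamma> 0 = P" "?\<gamma> 1 = rescale_triple 0 P"
    by (cases P, simp_all add: rescale_triple_def)
  have "rescale_triple c P \<in> O_set d" for c
  proof -
    have "rescale_triple c P \<in> A_set d"
      using P degree_rescale_le order_trans
      by (fastforce simp: O_set_def A_set_iff_component[OF d])
    moreover have "poly_knot (rescale_triple c P)"
      using P poly_knot_rescale_triple poly_knot_rescale_triple_0
      by (cases "c = 0") (auto simp: O_set_def)
    ultimately show ?thesis
      by (simp add: O_set_def)
  qed
  then show "?\<gamma> ` {0..1} \<subseteq> O_set d"
    by blast
qed

subsection \<open>From a linear knot to a knot of exact degrees\<close>

lemma poly_pderiv_monom_add_X_pos:
  assumes "odd n"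
  shows "0 < poly (pderiv (monom 1 n + [:0, 1 :: real:])) t"
proof -
  have "0 \<le> t ^ (n - 1)"
    using assms by (simp add: zero_le_even_power)
  then have "0 \<le> real n * t ^ (n - 1)"
    by simp
  then show ?thesis
    by (simp add: pderiv_add pderiv_monom poly_monom pderiv_pCons)
qed

lemma degree_monom_add_X: "1 \<le> n \<Longrightarrow> degree (monom 1 n + [:0, 1 :: real:]) = n"
  by (intro antisym degree_le le_degree) (auto simp: coeff_pCons split: nat.splits)

text \<open>\<open>k\<close> indexes the coordinate of odd degree \<open>d - 2 + k\<close>.\<close>

definition standard_knot :: "nat \<Rightarrow> nat \<Rightarrow> real \<Rightarrow> ptriple" where
  "standard_knot d k c = triple (\<lambda>i. if i = k then smult c (monom 1 (d - 2 + i) + [:0, 1:])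
                                   else monom 1 (d - 2 + i))"

lemma sgn_pderiv_standard_knot:
  assumes "k < 3" "odd (d - 2 + k)"
  shows "sgn (poly (pderiv (component k (standard_knot d k c))) t) = sgn c"
  using assms poly_pderiv_monom_add_X_pos[OF assms(2), of t]
  by (simp add: standard_knot_def pderiv_smult sgn_mult)

lemma standard_knot_in_Q_set:
  assumes "k < 3" "odd (d - 2 + k)" "c \<noteq> 0" "d \<ge> 2"
  shows "standard_knot d k c \<in> Q_set d"
proof -
  have pos: "1 \<le> d - 2 + k"
    using odd_pos[OF assms(2)] by linarith
  then have deg: "degree (component i (standard_knot d k c)) = d - 2 + i" if "i < 3" for i
    using assms that by (simp add: standard_knot_def degree_monom_add_X degree_monom_eq)
  have nonzero: "component i (standard_knot d k c) \<noteq> 0" if "i < 3" for i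
  proof (cases "i = k")
    case True
    then show ?thesis
      using deg[OF that] pos by auto
  next
    case False
    then show ?thesis
      using that by (simp add: standard_knot_def)
  qed
  have "poly (pderiv (component k (standard_knot d k c))) t \<noteq> 0" for t
    using sgn_pderiv_standard_knot[OF assms(1,2), of c t] assms(3) by (metis sgn_zero_iff)
  then have "poly_knot (standard_knot d k c)"
    by (rule poly_knot_if_component_pderiv_nonzero[OF assms(1)])
  with deg[of 0] deg[of 1] deg[of 2] nonzero[of 0] nonzero[of 1] nonzero[of 2] \<open>d \<ge> 2\<close>
  show ?thesis
    by (cases "standard_knot d k c") (auto simp: Q_set_def)
qed

lemma poly_pderiv_degree_le_1:
  assumes "degree p \<le> 1"
  shows "poly (pderiv p) t = coeff p 1"
proof -
  have "p = [:coeff p 0, coeff p 1:]"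
    using assms by (intro poly_eqI) (auto simp: coeff_pCons coeff_eq_0 split: nat.splits)
  moreover have "poly (pderiv [:coeff p 0, coeff p 1:]) t = coeff p 1"
    by (simp add: pderiv_pCons)
  ultimately show ?thesis
    by simp
qed

lemma joined_in_O_linear_knot_Q_set:
  assumes d: "d \<ge> 2" and L: "L \<in> O_set d"
    and linear: "\<And>i. i < 3 \<Longrightarrow> degree (component i L) \<le> 1"
  shows "\<exists>T \<in> Q_set d. joined_in_O d L T"
proof -
  define b where "b i = coeff (component i L) 1" for i
  have pderiv_L: "poly (pderiv (component i L)) t = b i" if "i < 3" for i t
    using linear[OF that] by (simp add: b_def poly_pderiv_degree_le_1)
  define k :: nat where "k = (if odd d then 2 else 1)"
  have k: "k < 3" "odd (d - 2 + k)"
    using d by (auto simp: k_def)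
  have "poly_knot L"
    using L by (simp add: O_set_def)
  then obtain i where i: "i < 3" "b i \<noteq> 0"
    unfolding b_def using poly_knot_imp_slope_nonzero by blast
  \<comment> \<open>Coordinate \<open>y\<close> keeps its slope along the first segment and coordinate \<open>k\<close> its sign
    along the second; when \<open>b k \<noteq> 0\<close>, taking \<open>y = k\<close> and \<open>c = b k\<close> makes the two fit.\<close>
  define y where "y = (if b k \<noteq> 0 then k else i)"
  have y: "y < 3" "b y \<noteq> 0"
    using i k by (auto simp: y_def)
  define c where "c = (if b k = 0 then 1 else b k)"
  define T where "T = standard_knot d k c"
  define M where "M = triple (\<lambda>j. if j = y then component j L else component j T)"
  have T: "T \<in> Q_set d"
    unfolding T_def using k d by (intro standard_knot_in_Q_set) (auto simp: c_def)
  then have "T \<in> A_set d" "L \<in> A_set d"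
    using L Q_set_subset_O_set by (auto simp: O_set_def)
  then have M: "M \<in> A_set d"
    by (simp add: M_def A_set_iff_component[OF d])
  have "joined_in_O d L M"
    using \<open>L \<in> A_set d\<close> M y
    by (intro joined_in_O_segment[OF d, of _ _ y "b y"]) (simp_all add: M_def pderiv_L)
  moreover have "joined_in_O d M T"
  proof (rule joined_in_O_segment[OF d M \<open>T \<in> A_set d\<close> k(1), of c])
    show "c \<noteq> 0" "sgn (poly (pderiv (component k T)) t) = sgn c" for t
      using sgn_pderiv_standard_knot[OF k] by (simp_all add: T_def c_def)
    show "sgn (poly (pderiv (component k M)) t) = sgn c" for t
      using k y sgn_pderiv_standard_knot[OF k] pderiv_L
      by (cases "y = k") (auto simp: M_def T_def c_def y_def)
  qed
  ultimately show ?thesis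
    using T joined_in_O_trans by blast
qed

theorem mainTheorem19:
  fixes d :: nat and \<phi> :: ptriple
  assumes "d \<ge> 2" and "\<phi> \<in> O_set d"
  shows "\<exists>\<psi> \<gamma>. \<psi> \<in> Q_set d \<and> coeff_continuous_on {0..1} \<gamma> \<and>
           \<gamma> ` {0..1} \<subseteq> O_set d \<and> \<gamma> 0 = \<phi> \<and> \<gamma> 1 = \<psi>"
proof -
  let ?L = "rescale_triple 0 \<phi>"
  have "joined_in_O d \<phi> ?L"
    using assms by (rule joined_in_O_rescale_triple_0)
  moreover have "\<exists>\<psi> \<in> Q_set d. joined_in_O d ?L \<psi>"
  proof (rule joined_in_O_linear_knot_Q_set[OF assms(1)])
    show "?L \<in> O_set d"
      using \<open>joined_in_O d \<phi> ?L\<close> by (rule joined_in_O_imp_in_O_set)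
    show "degree (component i ?L) \<le> 1" for i
      by (simp add: rescale_0)
  qed
  ultimately obtain \<psi> where "\<psi> \<in> Q_set d" "joined_in_O d \<phi> \<psi>"
    using joined_in_O_trans by blast
  then show ?thesis
    unfolding joined_in_O_def by blast
qed

end
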